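(* Let $k\ge3$, $\ell\ge2$ and let $G=\mathrm{Sym}(k)\wr\mathrm{Sym}(\ell)$ act in product action on $[k]^\ell$, where $[k]=\{1,\dots,k\}$. Then $G$ contains quasi-semiregular elements. Moreover, if $g\in G$ is a quasi-semiregular element of prime order, then $g$ lies in the base group, $g=(h_1,\dots,h_\ell)\in\mathrm{Sym}(k)^\ell$, and each $h_i$ is a quasi-semiregular permutation of $[k]$.
   Context: Product action: $(h_1,\dots,h_\ell)\in\mathrm{Sym}(k)^\ell$ maps $(\alpha_1,\dots,\alpha_\ell)\mapsto(\alpha_1^{h_1},\dots,\alpha_\ell^{h_\ell})$ and $\sigma\in\mathrm{Sym}(\ell)$ maps $(\alpha_1,\dots,\alpha_\ell)\mapsto(\alpha_{1\sigma^{-1}},\dots,\alpha_{\ell\sigma^{-1}})$. A permutation $g$ is quasi-semiregular if $\langle g\rangle$ has a unique fixed point and acts semiregularly (only the identity fixes a point) on the remaining points. *)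

theory Defs
  imports "HOL-Combinatorics.Permutations" "HOL-Computational_Algebra.Primes"
begin

text \<open>Points of [k]^l, with [k] = {1..k}; coordinates indexed by positions 0..<l of a list.\<close>
definition points :: "nat \<Rightarrow> nat \<Rightarrow> nat list set" where
  "points k l = {xs. length xs = l \<and> set xs \<subseteq> {1..k}}"

definition wr_act :: "(nat \<Rightarrow> nat \<Rightarrow> nat) \<Rightarrow> (nat \<Rightarrow> nat) \<Rightarrow> nat list \<Rightarrow> nat list" where
  "wr_act h \<sigma> xs = map (\<lambda>j. h (inv \<sigma> j) (xs ! inv \<sigma> j)) [0..<length xs]"

definition wreath_prod :: "nat \<Rightarrow> nat \<Rightarrow> (nat list \<Rightarrow> nat list) set" where
  "wreath_prod k l = {wr_act h \<sigma> | h \<sigma>.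
      (\<forall>i<l. h i permutes {1..k}) \<and> \<sigma> permutes {0..<l}}"

definition in_base_group :: "nat \<Rightarrow> nat \<Rightarrow> (nat list \<Rightarrow> nat list) \<Rightarrow> (nat \<Rightarrow> nat \<Rightarrow> nat) \<Rightarrow> bool" where
  "in_base_group k l g h \<longleftrightarrow> (\<forall>i<l. h i permutes {1..k}) \<and>
      (\<forall>xs\<in>points k l. g xs = wr_act h id xs)"

text \<open>Quasi-semiregular permutation g of a set S: the cyclic group <g> has a unique
  fixed point and acts semiregularly on the remaining points.\<close>
definition quasi_semiregular :: "'a set \<Rightarrow> ('a \<Rightarrow> 'a) \<Rightarrow> bool" where
  "quasi_semiregular S g \<longleftrightarrow>
     (\<exists>!x. x \<in> S \<and> (\<forall>n. (g ^^ n) x = x)) \<and>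
     (\<forall>y\<in>S. \<forall>n. (g ^^ n) y = y \<longrightarrow>
         (\<forall>x\<in>S. (g ^^ n) x = x) \<or> (\<forall>m. (g ^^ m) y = y))"

definition perm_order :: "'a set \<Rightarrow> ('a \<Rightarrow> 'a) \<Rightarrow> nat" where
  "perm_order S g = (LEAST n. 0 < n \<and> (\<forall>x\<in>S. (g ^^ n) x = x))"

end

theory Submission
  imports Defs "HOL-Combinatorics.Cycles"
begin

(* A (k-1)-cycle c on {2..k} fixes only 1, and each of its powers is either trivial or
   fixes nothing but 1; the diagonal element (c,...,c) of the base group inherits both
   properties on [k]^l.

   Conversely, let g = (h_1,...,h_l; sigma) be quasi-semiregular of prime order p. A point
   fixed by g but not by all of <g> would force g = 1, so the unique fixed point x0 is the only
   point fixed by g. If sigma moved some i, then g^p = 1 forces sigma^p = 1, so the sigma-orbit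
   of i has exactly p points, and propagating a value a <> x0_i along this orbit by powers of g
   (keeping x0 elsewhere) gives a second fixed point of g. Hence sigma = 1, and the maps
   b |-> x0[i := b] embed [k] into [k]^l intertwining h_i with g; quasi-semiregularity pulls
   back along such embeddings. *)

lemma funpow_fixed: "f x = x \<Longrightarrow> (f ^^ n) x = x"
  by (induct n) auto

lemma funpow_map: "map (f :: 'a \<Rightarrow> 'a) ^^ n = map (f ^^ n)"
  by (induct n) (simp_all add: map_comp_map list.map_id0 comp_def)

lemma map_eq_self_iff: "map f xs = xs \<longleftrightarrow> (\<forall>x\<in>set xs. f x = x)"
  by (induct xs) auto

lemma funpow_eq_imp_mod_eq_prime:
  assumes "inj f" "prime p" "(f ^^ p) x = x" "f x \<noteq> x" "(f ^^ s) x = (f ^^ t) x"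
  shows "s mod p = t mod p"
proof -
  have "least_power f x dvd p"
    using least_power_minimal assms(3) .
  moreover have "least_power f x \<noteq> 1"
    using least_powerI(1)[OF assms(3)] assms(2,4) prime_gt_0_nat by force
  ultimately have period: "p dvd d" if "(f ^^ d) x = x" for d
    using least_power_minimal[OF that] assms(2) by (metis prime_nat_iff)
  show ?thesis
  proof (cases "s \<le> t")
    case True
    then show ?thesis
      using period[OF funpow_diff[OF assms(1) True assms(5)]] by (metis mod_eq_dvd_iff_nat)
  next
    case False
    then show ?thesis
      using period[OF funpow_diff[OF assms(1) _ assms(5)[symmetric]]]
      by (metis mod_eq_dvd_iff_nat nat_le_linear)
  qed
qed

lemma funpow_range_preimage:
  assumes "inj f" "0 < p" "(f ^^ p) x = x" "f y \<in> range (\<lambda>s. (f ^^ s) x)"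
  shows "y \<in> range (\<lambda>s. (f ^^ s) x)"
proof -
  obtain s where "f y = (f ^^ s) x"
    using assms(4) by blast
  also have "\<dots> = (f ^^ (s + p)) x"
    using assms(3) by (simp add: funpow_add)
  also have "\<dots> = f ((f ^^ (s + p - 1)) x)"
    using assms(2) by (metis Suc_diff_1 add_gr_0 funpow.simps(2) comp_apply)
  finally show ?thesis
    using assms(1) by (auto simp: inj_eq)
qed

lemma finite_inj_on_funpow_eq_id:
  assumes "finite S" "g ` S \<subseteq> S" "inj_on g S"
  obtains n where "0 < n" "\<forall>x\<in>S. (g ^^ n) x = x"
proof -
  define p where "p x = (if x \<in> S then g x else x)" for x
  have "bij_betw g S S"
    using endo_inj_surj[OF assms] assms(3) by (simp add: bij_betw_def)
  then have "bij_betw p S S"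
    by (rule bij_betw_cong[THEN iffD1, rotated]) (simp add: p_def)
  then have p: "p permutes S"
    by (rule bij_imp_permutes) (simp add: p_def)
  then obtain n where n: "p ^^ n = id" "0 < n"
    using permutation_is_nilpotent permutes_imp_permutation assms(1) by metis
  have "(g ^^ m) x = (p ^^ m) x" if "x \<in> S" for m x
  proof (induct m)
    case (Suc m)
    have "(p ^^ m) x \<in> S"
      using permutes_in_image[OF permutes_funpow[OF p]] that by simp
    then have "(p ^^ Suc m) x = g ((p ^^ m) x)"
      by (simp add: p_def)
    then show ?case using Suc by simp
  qed simp
  then show thesis using that n by simp
qed

lemma perm_order_funpow:
  assumes "0 < n" "\<forall>x\<in>S. (g ^^ n) x = x"
  shows "\<forall>x\<in>S. (g ^^ perm_order S g) x = x"
  using LeastI[of "\<lambda>n. 0 < n \<and> (\<forall>x\<in>S. (g ^^ n) x = x)" n] assms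
  unfolding perm_order_def by blast

lemma quasi_semiregular_fixed_point_unique:
  assumes qsr: "quasi_semiregular S g" and "perm_order S g \<noteq> 1"
    and "x \<in> S" "g x = x" "y \<in> S" "g y = y"
  shows "x = y"
proof -
  have not_id: "\<not> (\<forall>z\<in>S. (g ^^ 1) z = z)"
  proof
    assume "\<forall>z\<in>S. (g ^^ 1) z = z"
    then have "perm_order S g = 1"
      unfolding perm_order_def by (intro Least_equality) auto
    with assms(2) show False ..
  qed
  have "\<forall>n. (g ^^ n) z = z" if "z \<in> S" "g z = z" for z
  proof -
    have "(g ^^ 1) z = z"
      using that(2) by simp
    then have "(\<forall>x\<in>S. (g ^^ 1) x = x) \<or> (\<forall>n. (g ^^ n) z = z)"
      using qsr that(1) unfolding quasi_semiregular_def by blast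
    then show ?thesis
      using not_id by blast
  qed
  moreover have "\<exists>!x. x \<in> S \<and> (\<forall>n. (g ^^ n) x = x)"
    using qsr unfolding quasi_semiregular_def by blast
  ultimately show ?thesis
    using assms(3-6) by blast
qed

lemma quasi_semiregular_pullback:
  assumes qsr: "quasi_semiregular S g"
    and e: "inj_on e T" "e ` T \<subseteq> S" and f: "f ` T \<subseteq> T"
    and intertwine: "\<And>b. b \<in> T \<Longrightarrow> g (e b) = e (f b)"
    and b0: "b0 \<in> T" "f b0 = b0"
  shows "quasi_semiregular T f"
proof -
  have f_funpow: "(f ^^ n) b \<in> T" if "b \<in> T" for n b
    using that f by (induct n) auto
  have "(g ^^ n) (e b) = e ((f ^^ n) b)" if "b \<in> T" for n b
    using that by (induct n) (simp_all add: intertwine f_funpow)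
  then have fixed_iff: "(f ^^ n) b = b \<longleftrightarrow> (g ^^ n) (e b) = e b" if "b \<in> T" for n b
    using that f_funpow e(1) by (simp add: inj_on_eq_iff)
  have e_b0: "e b0 \<in> S \<and> (\<forall>n. (g ^^ n) (e b0) = e b0)"
    using b0 e(2) by (simp add: funpow_fixed image_subset_iff intertwine)
  show ?thesis
    unfolding quasi_semiregular_def
  proof (intro conjI ballI allI impI)
    show "\<exists>!b. b \<in> T \<and> (\<forall>n. (f ^^ n) b = b)"
    proof (rule ex1I[of _ b0])
      show "b0 \<in> T \<and> (\<forall>n. (f ^^ n) b0 = b0)"
        using b0 by (simp add: funpow_fixed)
      fix b assume "b \<in> T \<and> (\<forall>n. (f ^^ n) b = b)"
      then have "e b \<in> S \<and> (\<forall>n. (g ^^ n) (e b) = e b)"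
        using fixed_iff e(2) by blast
      moreover have "\<exists>!x. x \<in> S \<and> (\<forall>n. (g ^^ n) x = x)"
        using qsr unfolding quasi_semiregular_def by blast
      ultimately have "e b = e b0"
        using e_b0 by blast
      then show "b = b0"
        using \<open>b \<in> T \<and> _\<close> b0(1) e(1) by (simp add: inj_on_eq_iff)
    qed
  next
    fix b n assume "b \<in> T" "(f ^^ n) b = b"
    then have "(\<forall>x\<in>S. (g ^^ n) x = x) \<or> (\<forall>m. (g ^^ m) (e b) = e b)"
      using qsr fixed_iff e(2) unfolding quasi_semiregular_def by blast
    then show "(\<forall>c\<in>T. (f ^^ n) c = c) \<or> (\<forall>m. (f ^^ m) b = b)"
      using fixed_iff \<open>b \<in> T\<close> e(2) by blast
  qed
qed

lemma quasi_semiregular_map: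
  assumes qsr: "quasi_semiregular A c"
  shows "quasi_semiregular {xs. length xs = n \<and> set xs \<subseteq> A} (map c)"
proof -
  obtain a0 where a0: "a0 \<in> A" "\<forall>m. (c ^^ m) a0 = a0"
    and unique: "\<And>a. a \<in> A \<Longrightarrow> \<forall>m. (c ^^ m) a = a \<Longrightarrow> a = a0"
    using qsr unfolding quasi_semiregular_def by metis
  have fixed_iff: "(map c ^^ m) xs = xs \<longleftrightarrow> (\<forall>a\<in>set xs. (c ^^ m) a = a)" for m xs
    by (simp add: funpow_map map_eq_self_iff)
  show ?thesis
    unfolding quasi_semiregular_def
  proof (intro conjI ballI allI impI)
    show "\<exists>!xs. xs \<in> {xs. length xs = n \<and> set xs \<subseteq> A} \<and> (\<forall>m. (map c ^^ m) xs = xs)"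
    proof (rule ex1I[of _ "replicate n a0"])
      fix xs assume "xs \<in> {xs. length xs = n \<and> set xs \<subseteq> A} \<and> (\<forall>m. (map c ^^ m) xs = xs)"
      then show "xs = replicate n a0"
        using unique fixed_iff
        by (metis (mono_tags, lifting) mem_Collect_eq replicate_length_same subsetD)
    qed (use a0 fixed_iff in auto)
  next
    fix xs m assume xs: "xs \<in> {xs. length xs = n \<and> set xs \<subseteq> A}" and "(map c ^^ m) xs = xs"
    then have fixed: "\<forall>a\<in>set xs. (c ^^ m) a = a"
      by (simp add: fixed_iff)
    show "(\<forall>ys\<in>{xs. length xs = n \<and> set xs \<subseteq> A}. (map c ^^ m) ys = ys) \<or>
          (\<forall>m'. (map c ^^ m') xs = xs)"
    proof (cases "\<forall>a\<in>set xs. a = a0")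
      case True
      then show ?thesis using a0 fixed_iff by auto
    next
      case False
      then obtain a where "a \<in> set xs" "a \<noteq> a0" by blast
      then have "\<forall>b\<in>A. (c ^^ m) b = b"
        using qsr xs fixed unique unfolding quasi_semiregular_def by blast
      then show ?thesis using fixed_iff by blast
    qed
  qed
qed

lemma cycle_of_list_funpow_fixed_iff:
  assumes "distinct cs" "y \<in> set cs"
  shows "(cycle_of_list cs ^^ n) y = y \<longleftrightarrow> length cs dvd n"
proof -
  obtain j where j: "j < length cs" "y = cs ! j"
    using assms(2) by (auto simp: in_set_conv_nth)
  have "(cycle_of_list cs ^^ n) y = rotate n cs ! j"
    using cyclic_rotation[OF assms(1), of n] j by (metis nth_map)
  also have "\<dots> = cs ! ((n + j) mod length cs)"
    using j by (simp add: nth_rotate)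
  moreover have "(n + j) mod length cs < length cs"
    using j(1) by (intro mod_less_divisor) (cases cs, auto)
  ultimately have "(cycle_of_list cs ^^ n) y = y \<longleftrightarrow> (n + j) mod length cs = j"
    using j assms(1) by (simp add: nth_eq_iff_index_eq)
  also have "\<dots> \<longleftrightarrow> length cs dvd n"
    using j(1) by (metis le_add2 le_imp_diff_is_add mod_eq_dvd_iff_nat mod_if)
  finally show ?thesis .
qed

lemma quasi_semiregular_cycle:
  assumes "3 \<le> k"
  shows "quasi_semiregular {1..k} (cycle_of_list [2..<Suc k])"
proof -
  let ?c = "cycle_of_list [2..<Suc k]"
  have fixed_iff: "(?c ^^ n) y = y \<longleftrightarrow> (k - 1) dvd n" if "y \<in> {2..k}" for n y
  proof -
    have "y \<in> set [2..<Suc k]" "length [2..<Suc k] = k - 1"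
      using that by auto
    then show ?thesis
      using cycle_of_list_funpow_fixed_iff[of "[2..<Suc k]" y n] by simp
  qed
  have one: "(?c ^^ n) 1 = 1" for n
    by (simp add: funpow_fixed id_outside_supp)
  have not_dvd_one: "\<not> (k - 1) dvd 1"
    using assms by simp
  have cases: "y = 1 \<or> y \<in> {2..k}" if "y \<in> {1..k}" for y
    using that by auto
  show ?thesis
    unfolding quasi_semiregular_def
  proof (intro conjI ballI allI impI)
    show "\<exists>!x. x \<in> {1..k} \<and> (\<forall>n. (?c ^^ n) x = x)"
    proof (rule ex1I[of _ 1])
      fix y assume "y \<in> {1..k} \<and> (\<forall>n. (?c ^^ n) y = y)"
      then show "y = 1"
        using cases fixed_iff[of y 1] not_dvd_one by blast
    qed (use assms one in auto)
  next
    fix y n assume "y \<in> {1..k}" "(?c ^^ n) y = y"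
    then show "(\<forall>x\<in>{1..k}. (?c ^^ n) x = x) \<or> (\<forall>m. (?c ^^ m) y = y)"
    proof (cases "y = 1")
      case False
      then have "(k - 1) dvd n"
        using \<open>y \<in> {1..k}\<close> \<open>(?c ^^ n) y = y\<close> fixed_iff by auto
      then show ?thesis
        using cases fixed_iff one by blast
    qed (use one in blast)
  qed
qed

lemma cycle_permutes_interval:
  "cycle_of_list [2..<Suc k] permutes {1..k}"
  by (rule permutes_subset[OF cycle_permutes]) auto

lemma finite_points: "finite (points k l)"
  using finite_lists_length_eq[of "{1..k}" l] by (simp add: points_def conj_commute)

lemma points_nth: "xs \<in> points k l \<Longrightarrow> i < l \<Longrightarrow> xs ! i \<in> {1..k}"
  unfolding points_def using nth_mem by blast

lemma points_update: "xs \<in> points k l \<Longrightarrow> b \<in> {1..k} \<Longrightarrow> xs[i := b] \<in> points k l"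
  using set_update_subset_insert[of xs i b] by (auto simp: points_def)

locale wreath_element =
  fixes k l :: nat and h :: "nat \<Rightarrow> nat \<Rightarrow> nat" and \<sigma> :: "nat \<Rightarrow> nat"
  assumes h_permutes: "\<And>i. i < l \<Longrightarrow> h i permutes {1..k}"
    and \<sigma>_permutes: "\<sigma> permutes {0..<l}"
begin

lemma \<sigma>_funpow_less: "i < l \<Longrightarrow> (\<sigma> ^^ n) i < l"
  using permutes_in_image[OF permutes_funpow[OF \<sigma>_permutes]] by simp

lemma inv_\<sigma>_less: "j < l \<Longrightarrow> inv \<sigma> j < l"
  using permutes_in_image[OF permutes_inv[OF \<sigma>_permutes]] by simp

lemma wr_act_nth: "length xs = l \<Longrightarrow> m < l \<Longrightarrow> wr_act h \<sigma> xs ! \<sigma> m = h m (xs ! m)"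
  using \<sigma>_funpow_less[of m 1] by (simp add: wr_act_def permutes_inverses(2)[OF \<sigma>_permutes])

lemma wr_act_in_points: "xs \<in> points k l \<Longrightarrow> wr_act h \<sigma> xs \<in> points k l"
  using permutes_in_image[OF h_permutes] inv_\<sigma>_less points_nth
  by (fastforce simp: points_def wr_act_def)

lemma wr_act_funpow_in_points: "xs \<in> points k l \<Longrightarrow> (wr_act h \<sigma> ^^ n) xs \<in> points k l"
  by (induct n) (simp_all add: wr_act_in_points)

lemma wr_act_fixed_iff:
  assumes "xs \<in> points k l"
  shows "wr_act h \<sigma> xs = xs \<longleftrightarrow> (\<forall>m<l. xs ! \<sigma> m = h m (xs ! m))"
proof
  assume fixed: "wr_act h \<sigma> xs = xs"
  have "length xs = l"
    using assms by (simp add: points_def)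
  then show "\<forall>m<l. xs ! \<sigma> m = h m (xs ! m)"
    using wr_act_nth fixed by metis
next
  assume fixed: "\<forall>m<l. xs ! \<sigma> m = h m (xs ! m)"
  have "wr_act h \<sigma> xs ! j = xs ! j" if "j < l" for j
    using that assms fixed[rule_format, OF inv_\<sigma>_less[OF that]]
    by (simp add: wr_act_def points_def permutes_inverses(1)[OF \<sigma>_permutes])
  then show "wr_act h \<sigma> xs = xs"
    using assms by (intro nth_equalityI) (simp_all add: wr_act_def points_def)
qed

lemma inj_on_wr_act: "inj_on (wr_act h \<sigma>) (points k l)"
proof (rule inj_onI)
  fix xs ys assume xs: "xs \<in> points k l" and ys: "ys \<in> points k l"
    and eq: "wr_act h \<sigma> xs = wr_act h \<sigma> ys"
  have "xs ! m = ys ! m" if "m < l" for m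
    using wr_act_nth[of xs m] wr_act_nth[of ys m] eq xs ys that
      permutes_inj[OF h_permutes[OF that]]
    by (simp add: points_def inj_eq)
  then show "xs = ys"
    using xs ys by (intro nth_equalityI) (simp_all add: points_def)
qed

lemma wr_act_finite_order:
  obtains n where "0 < n" "\<forall>xs\<in>points k l. (wr_act h \<sigma> ^^ n) xs = xs"
  using finite_inj_on_funpow_eq_id[OF finite_points _ inj_on_wr_act] wr_act_in_points by blast

lemma wr_act_funpow_nth_cong:
  assumes "xs \<in> points k l" "ys \<in> points k l" "i < l" "xs ! i = ys ! i"
  shows "(wr_act h \<sigma> ^^ n) xs ! (\<sigma> ^^ n) i = (wr_act h \<sigma> ^^ n) ys ! (\<sigma> ^^ n) i"
proof (induct n)
  case (Suc n)
  have "length ((wr_act h \<sigma> ^^ n) zs) = l" if "zs \<in> points k l" for zs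
    using wr_act_funpow_in_points[OF that] by (simp add: points_def)
  then show ?case
    using Suc assms(1,2) wr_act_nth \<sigma>_funpow_less[OF assms(3)] by simp
qed (use assms in simp)

lemma funpow_id_imp_\<sigma>_funpow_fixed:
  assumes "2 \<le> k" "\<forall>xs\<in>points k l. (wr_act h \<sigma> ^^ n) xs = xs" "i < l"
  shows "(\<sigma> ^^ n) i = i"
proof (rule ccontr)
  assume moved: "(\<sigma> ^^ n) i \<noteq> i"
  define xs where "xs = replicate l (1::nat)"
  define ys where "ys = xs[(\<sigma> ^^ n) i := 2]"
  have "xs \<in> points k l"
    using assms(1) by (auto simp: xs_def points_def)
  moreover have "ys \<in> points k l"
    unfolding ys_def using assms(1) \<open>xs \<in> points k l\<close> by (intro points_update) auto
  moreover have "xs ! i = ys ! i"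
    using moved by (simp add: ys_def)
  ultimately have "xs ! (\<sigma> ^^ n) i = ys ! (\<sigma> ^^ n) i"
    using wr_act_funpow_nth_cong[of xs ys i n] assms(2,3) by simp
  then show False
    using \<sigma>_funpow_less[OF assms(3)] by (simp add: xs_def ys_def)
qed

definition orbit_fill :: "nat \<Rightarrow> nat list \<Rightarrow> nat list \<Rightarrow> nat list" where
  "orbit_fill i x x0 = map (\<lambda>j. if j \<in> range (\<lambda>s. (\<sigma> ^^ s) i)
                                then (wr_act h \<sigma> ^^ (SOME s. (\<sigma> ^^ s) i = j)) x ! j
                                else x0 ! j) [0..<l]"

lemma orbit_fill_in_points:
  assumes "x \<in> points k l" "x0 \<in> points k l"
  shows "orbit_fill i x x0 \<in> points k l"
proof -
  have "orbit_fill i x x0 ! j \<in> {1..k}" if "j < l" for j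
    using that points_nth[OF assms(2)] points_nth[OF wr_act_funpow_in_points[OF assms(1)]]
    by (auto simp: orbit_fill_def)
  moreover have "length (orbit_fill i x x0) = l"
    by (simp add: orbit_fill_def)
  ultimately show ?thesis
    unfolding points_def by (auto simp: in_set_conv_nth)
qed

context
  fixes p i :: nat
  assumes two_le_k: "2 \<le> k" and prime_p: "prime p"
    and order: "\<forall>xs\<in>points k l. (wr_act h \<sigma> ^^ p) xs = xs"
    and i: "i < l" and moved: "\<sigma> i \<noteq> i"
begin

lemma \<sigma>_funpow_p_fixed: "(\<sigma> ^^ p) i = i"
  using funpow_id_imp_\<sigma>_funpow_fixed[OF two_le_k order i] .

(* The exponent chosen by SOME in orbit_fill does not matter, since the sigma-orbit of i
   has prime length p and g^p = 1. *)
lemma orbit_fill_nth_orbit: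
  assumes "x \<in> points k l"
  shows "orbit_fill i x x0 ! (\<sigma> ^^ s) i = (wr_act h \<sigma> ^^ s) x ! (\<sigma> ^^ s) i"
proof -
  define t where "t = (SOME t. (\<sigma> ^^ t) i = (\<sigma> ^^ s) i)"
  have t: "(\<sigma> ^^ t) i = (\<sigma> ^^ s) i"
    unfolding t_def by (rule someI) (rule refl)
  then have "t mod p = s mod p"
    by (rule funpow_eq_imp_mod_eq_prime[OF permutes_inj[OF \<sigma>_permutes] prime_p \<sigma>_funpow_p_fixed moved])
  then have "(wr_act h \<sigma> ^^ t) x = (wr_act h \<sigma> ^^ s) x"
    using order assms by (metis funpow_mod_eq)
  then show ?thesis
    using t \<sigma>_funpow_less[OF i] by (simp add: orbit_fill_def t_def)
qed

lemma orbit_fill_fixed: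
  assumes x: "x \<in> points k l" and x0: "x0 \<in> points k l" "wr_act h \<sigma> x0 = x0"
  shows "wr_act h \<sigma> (orbit_fill i x x0) = orbit_fill i x x0"
  unfolding wr_act_fixed_iff[OF orbit_fill_in_points[OF x x0(1)]]
proof (intro allI impI)
  let ?g = "wr_act h \<sigma>" and ?y = "orbit_fill i x x0" and ?orb = "range (\<lambda>s. (\<sigma> ^^ s) i)"
  fix m assume "m < l"
  show "?y ! \<sigma> m = h m (?y ! m)"
  proof (cases "m \<in> ?orb")
    case True
    then obtain s where m: "m = (\<sigma> ^^ s) i"
      by blast
    have "?y ! \<sigma> m = (?g ^^ Suc s) x ! (\<sigma> ^^ Suc s) i"
      using orbit_fill_nth_orbit[OF x, of x0 "Suc s"] m by simp
    also have "\<dots> = h m ((?g ^^ s) x ! m)"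
      using wr_act_nth[of "(?g ^^ s) x" m] wr_act_funpow_in_points[OF x] \<open>m < l\<close> m
      by (simp add: points_def)
    finally show ?thesis
      using orbit_fill_nth_orbit[OF x, of x0 s] m by simp
  next
    case False
    then have "\<sigma> m \<notin> ?orb"
      using funpow_range_preimage[OF permutes_inj[OF \<sigma>_permutes] prime_gt_0_nat[OF prime_p]
          \<sigma>_funpow_p_fixed] by blast
    then show ?thesis
      using False \<open>m < l\<close> \<sigma>_funpow_less[of m 1] x0 wr_act_fixed_iff
      by (simp add: orbit_fill_def)
  qed
qed

lemma wr_act_second_fixed_point:
  assumes x0: "x0 \<in> points k l" "wr_act h \<sigma> x0 = x0"
  shows "\<exists>y\<in>points k l. wr_act h \<sigma> y = y \<and> y \<noteq> x0"
proof -
  define a where "a = (if x0 ! i = 1 then 2 else 1 :: nat)"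
  have x: "x0[i := a] \<in> points k l"
    unfolding a_def using x0(1) two_le_k by (intro points_update) auto
  have "orbit_fill i (x0[i := a]) x0 ! i = a"
    using orbit_fill_nth_orbit[OF x, of x0 0] i x0(1) by (simp add: points_def)
  then have "orbit_fill i (x0[i := a]) x0 \<noteq> x0"
    by (auto simp: a_def split: if_splits)
  then show ?thesis
    using orbit_fill_in_points[OF x x0(1)] orbit_fill_fixed[OF x x0] by blast
qed

end

lemma quasi_semiregular_prime_order_imp_id:
  assumes "2 \<le> k" and qsr: "quasi_semiregular (points k l) (wr_act h \<sigma>)"
    and prime: "prime (perm_order (points k l) (wr_act h \<sigma>))"
  shows "\<sigma> = id"
proof
  let ?g = "wr_act h \<sigma>" and ?P = "points k l"
  obtain n where "0 < n" "\<forall>xs\<in>?P. (?g ^^ n) xs = xs"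
    by (rule wr_act_finite_order)
  then have order: "\<forall>xs\<in>?P. (?g ^^ perm_order ?P ?g) xs = xs"
    by (rule perm_order_funpow)
  obtain x0 where x0: "x0 \<in> ?P" "\<forall>n. (?g ^^ n) x0 = x0"
    using qsr unfolding quasi_semiregular_def by blast
  have "?g x0 = x0"
    using x0(2)[rule_format, of 1] by simp
  fix i show "\<sigma> i = id i"
  proof (rule ccontr)
    assume moved: "\<sigma> i \<noteq> id i"
    then have "i < l"
      using permutes_not_in[OF \<sigma>_permutes] by fastforce
    then obtain y where y: "y \<in> ?P" "?g y = y" "y \<noteq> x0"
      using wr_act_second_fixed_point[OF assms(1) prime order _ _ x0(1) \<open>?g x0 = x0\<close>] moved
      by auto
    moreover have "y = x0"
      using quasi_semiregular_fixed_point_unique[OF qsr _ y(1,2) x0(1) \<open>?g x0 = x0\<close>] prime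
      by (metis not_prime_1)
    ultimately show False
      by blast
  qed
qed

end

lemma wr_act_id_nth: "j < length xs \<Longrightarrow> wr_act h id xs ! j = h j (xs ! j)"
  by (simp add: wr_act_def)

lemma wr_act_const_id: "wr_act (\<lambda>_. c) id = map c"
  by (rule ext, rule nth_equalityI) (simp_all add: wr_act_def)

lemma quasi_semiregular_base_component:
  assumes h: "\<forall>i<l. h i permutes {1..k}" and qsr: "quasi_semiregular (points k l) (wr_act h id)"
    and "i < l"
  shows "quasi_semiregular {1..k} (h i)"
proof -
  obtain x0 where x0: "x0 \<in> points k l" "\<forall>n. (wr_act h id ^^ n) x0 = x0"
    using qsr unfolding quasi_semiregular_def by blast
  have len: "length x0 = l"
    using x0(1) by (simp add: points_def)
  have "wr_act h id x0 = x0"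
    using x0(2)[rule_format, of 1] by simp
  then have fixed: "h j (x0 ! j) = x0 ! j" if "j < l" for j
    using wr_act_id_nth[of j x0 h] that len by metis
  show ?thesis
  proof (rule quasi_semiregular_pullback[OF qsr, where e = "\<lambda>b. x0[i := b]"])
    show "inj_on (\<lambda>b. x0[i := b]) {1..k}"
      using \<open>i < l\<close> len by (intro inj_onI) (metis nth_list_update_eq)
    show "(\<lambda>b. x0[i := b]) ` {1..k} \<subseteq> points k l"
      using x0(1) points_update by blast
    show "h i ` {1..k} \<subseteq> {1..k}"
      using permutes_image[OF h[rule_format, OF \<open>i < l\<close>]] by simp
    show "wr_act h id (x0[i := b]) = x0[i := h i b]" if "b \<in> {1..k}" for b
      using fixed len \<open>i < l\<close>
      by (intro nth_equalityI) (auto simp: wr_act_id_nth nth_list_update wr_act_def)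
    show "x0 ! i \<in> {1..k}" "h i (x0 ! i) = x0 ! i"
      using points_nth[OF x0(1) \<open>i < l\<close>] fixed \<open>i < l\<close> by auto
  qed
qed

theorem theorem5p1:
  fixes k l :: nat
  assumes "k \<ge> 3" and "l \<ge> 2"
  shows "(\<exists>g\<in>wreath_prod k l. quasi_semiregular (points k l) g) \<and>
         (\<forall>g\<in>wreath_prod k l.
            quasi_semiregular (points k l) g \<and> prime (perm_order (points k l) g) \<longrightarrow>
            (\<exists>h. in_base_group k l g h \<and>
                 (\<forall>i<l. quasi_semiregular {1..k} (h i))))"
proof
  let ?c = "cycle_of_list [2..<Suc k]"
  have "wr_act (\<lambda>_. ?c) id \<in> wreath_prod k l"
    unfolding wreath_prod_def using cycle_permutes_interval permutes_id by blast
  moreover have "quasi_semiregular (points k l) (wr_act (\<lambda>_. ?c) id)"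
    unfolding wr_act_const_id points_def
    using quasi_semiregular_map[OF quasi_semiregular_cycle[OF assms(1)]] .
  ultimately show "\<exists>g\<in>wreath_prod k l. quasi_semiregular (points k l) g"
    by blast
next
  show "\<forall>g\<in>wreath_prod k l.
          quasi_semiregular (points k l) g \<and> prime (perm_order (points k l) g) \<longrightarrow>
          (\<exists>h. in_base_group k l g h \<and> (\<forall>i<l. quasi_semiregular {1..k} (h i)))"
  proof (intro ballI impI)
    fix g assume "g \<in> wreath_prod k l"
      and qsr: "quasi_semiregular (points k l) g \<and> prime (perm_order (points k l) g)"
    then obtain h \<sigma> where g: "g = wr_act h \<sigma>" and h: "\<forall>i<l. h i permutes {1..k}"
      and \<sigma>: "\<sigma> permutes {0..<l}"
      unfolding wreath_prod_def by blast
    interpret wreath_element k l h \<sigma>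
      using h \<sigma> by unfold_locales auto
    have "\<sigma> = id"
      using quasi_semiregular_prime_order_imp_id assms(1) qsr g by auto
    then show "\<exists>h. in_base_group k l g h \<and> (\<forall>i<l. quasi_semiregular {1..k} (h i))"
      using h qsr g quasi_semiregular_base_component unfolding in_base_group_def by auto
  qed
qed

end
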